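(* Let $\alpha>0$ and let $n$ be a positive integer with $\alpha n>1$. Let $q\in\mathbb{C}$ satisfy $0<|q|\leq 1-1/(\alpha n)$ and let $z\in\mathbb{C}$ satisfy $|z|=|q|^{-n-1/2}$. Then $U:=\prod_{m=1}^{\infty}(1+zq^m)$ satisfies $$|U|\geq |q|^{-n^2/2}e^{-(\pi^2/3)(\alpha n(\alpha n-1))^{1/2}}.$$ *)

theory Defs
  imports "HOL-Analysis.Analysis"
begin

end

theory Submission
  imports Defs
begin

text \<open>
  Put \<open>s = sqrt |q|\<close>, so that \<open>|z q^m| = s^(2(m - n) - 1)\<close>. For \<open>m \<le> n\<close> the factor
  \<open>|1 + z q^m|\<close> is at least \<open>|z q^m| - 1 = |z q^m| (1 - s^(2(n - m) + 1))\<close>, and for \<open>m > n\<close>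
  it is at least \<open>1 - s^(2(m - n) - 1)\<close>. The moduli \<open>|z q^m|\<close>, \<open>m \<le> n\<close>, multiply to
  \<open>|q|^(-n\<^sup>2/2)\<close>, and what remains is bounded below by the square of
  \<open>P = \<Prod>\<^sub>k (1 - s^(2k+1))\<close>. Expanding \<open>-log (1 - x)\<close> as a power series and using
  \<open>j s^(j-1) (1 - s\<^sup>2) \<le> 1 - s^(2j)\<close> gives \<open>-log P \<le> (\<pi>\<^sup>2/6) s / (1 - s\<^sup>2)\<close>, and
  \<open>s / (1 - s\<^sup>2) = sqrt |q| / (1 - |q|) \<le> sqrt (\<alpha>n (\<alpha>n - 1))\<close> once \<open>|q| \<le> 1 - 1/(\<alpha>n)\<close>.
\<close>

lemma mult_power_le_sum_even_powers:
  fixes s :: real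
  assumes "0 \<le> s"
  shows "real j * s ^ (j - 1) \<le> (\<Sum>i<j. s ^ (2 * i))"
proof -
  \<comment> \<open>AM-GM on the terms \<open>i\<close> and \<open>j - 1 - i\<close> of the sum\<close>
  have pair: "2 * s ^ (j - 1) \<le> s ^ (2 * i) + s ^ (2 * (j - Suc i))" if "i < j" for i
  proof -
    have "s ^ (j - 1) = s ^ i * s ^ (j - Suc i)"
      using that by (simp flip: power_add)
    moreover have "0 \<le> (s ^ i - s ^ (j - Suc i))\<^sup>2" by simp
    ultimately show ?thesis
      unfolding power_even_eq by (simp add: power2_eq_square algebra_simps)
  qed
  have "2 * (real j * s ^ (j - 1)) = (\<Sum>i<j. 2 * s ^ (j - 1))" by simp
  also have "\<dots> \<le> (\<Sum>i<j. s ^ (2 * i) + s ^ (2 * (j - Suc i)))"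
    using pair by (intro sum_mono) auto
  also have "\<dots> = 2 * (\<Sum>i<j. s ^ (2 * i))"
    by (simp add: sum.distrib sum.nat_diff_reindex[of "\<lambda>i. s ^ (2 * i)"])
  finally show ?thesis by simp
qed

lemma power_div_one_minus_power_le:
  fixes s :: real
  assumes "0 < s" "s < 1" "j \<ge> 1"
  shows "s ^ j / (1 - s ^ (2 * j)) \<le> s / ((1 - s\<^sup>2) * real j)"
proof -
  have "s\<^sup>2 < 1" "s ^ (2 * j) < 1"
    using assms by (simp_all add: power_less_one_iff)
  have "real j * s ^ j * (1 - s\<^sup>2) = s * (1 - s\<^sup>2) * (real j * s ^ (j - 1))"
    using assms(3) by (cases j) auto
  also have "\<dots> \<le> s * (1 - s\<^sup>2) * (\<Sum>i<j. s ^ (2 * i))"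
    using \<open>s\<^sup>2 < 1\<close> assms
    by (intro mult_left_mono mult_power_le_sum_even_powers) auto
  also have "\<dots> = s * (1 - s ^ (2 * j))"
    by (simp add: one_diff_power_eq[symmetric] power_mult)
  finally show ?thesis
    using \<open>s\<^sup>2 < 1\<close> \<open>s ^ (2 * j) < 1\<close> assms by (simp add: field_simps)
qed

lemma sum_odd_powers_div_le:
  fixes s :: real
  assumes "0 < s" "s < 1"
  shows "(\<Sum>k<K. (s ^ (2 * k + 1)) ^ j / real j) \<le> s / (1 - s\<^sup>2) * (1 / (real j)\<^sup>2)"
proof (cases "j = 0")
  case False
  have "s ^ (2 * j) < 1" using assms False by (simp add: power_less_one_iff)
  have "(\<Sum>k<K. (s ^ (2 * k + 1)) ^ j) = s ^ j * (\<Sum>k<K. (s ^ (2 * j)) ^ k)"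
    by (simp add: sum_distrib_left power_add power_mult_distrib algebra_simps flip: power_mult)
  also have "\<dots> \<le> s ^ j * (1 / (1 - s ^ (2 * j)))"
  proof (rule mult_left_mono)
    have "(1 - s ^ (2 * j)) * (\<Sum>k<K. (s ^ (2 * j)) ^ k) = 1 - (s ^ (2 * j)) ^ K"
      by (simp add: one_diff_power_eq)
    also have "\<dots> \<le> 1" using assms by simp
    finally show "(\<Sum>k<K. (s ^ (2 * j)) ^ k) \<le> 1 / (1 - s ^ (2 * j))"
      using \<open>s ^ (2 * j) < 1\<close> by (simp add: field_simps)
  qed (use assms in simp)
  also have "\<dots> \<le> s / ((1 - s\<^sup>2) * real j)"
    using power_div_one_minus_power_le assms False by simp
  finally have "(\<Sum>k<K. (s ^ (2 * k + 1)) ^ j) / real j \<le> s / ((1 - s\<^sup>2) * real j) / real j"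
    by (rule divide_right_mono) simp
  then show ?thesis
    by (simp add: sum_divide_distrib power2_eq_square)
qed simp

lemma sum_neg_ln_one_minus_odd_powers_le:
  fixes s :: real
  assumes "0 < s" "s < 1"
  shows "(\<Sum>k<K. - ln (1 - s ^ (2 * k + 1))) \<le> s / (1 - s\<^sup>2) * (pi\<^sup>2 / 6)"
proof -
  have "(\<lambda>j. (s ^ (2 * k + 1)) ^ j / real j) sums (- ln (1 - s ^ (2 * k + 1)))" for k
  proof -
    have "s ^ (2 * k + 1) < 1"
      using assms by (intro power_less_one_iff[THEN iffD2]) auto
    then have "\<bar>- (s ^ (2 * k + 1))\<bar> < 1"
      using assms by simp
    from sums_minus[OF ln_series'[OF this]] show ?thesis by simp
  qed
  then have lhs: "(\<lambda>j. \<Sum>k<K. (s ^ (2 * k + 1)) ^ j / real j)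
                    sums (\<Sum>k<K. - ln (1 - s ^ (2 * k + 1)))"
    by (intro sums_sum)
  have "(\<lambda>j. 1 / (real j)\<^sup>2) sums (pi\<^sup>2 / 6)"
    using inverse_squares_sums sums_Suc_iff[of "\<lambda>j. 1 / (real j)\<^sup>2"] by (simp add: add.commute)
  then have rhs: "(\<lambda>j. s / (1 - s\<^sup>2) * (1 / (real j)\<^sup>2)) sums (s / (1 - s\<^sup>2) * (pi\<^sup>2 / 6))"
    by (rule sums_mult)
  show ?thesis
    using sums_le[OF _ lhs rhs] sum_odd_powers_div_le[OF assms] by blast
qed

lemma prod_one_minus_odd_powers_ge:
  fixes s :: real
  assumes "0 < s" "s < 1"
  shows "exp (- (s / (1 - s\<^sup>2) * (pi\<^sup>2 / 6))) \<le> (\<Prod>k<K. 1 - s ^ (2 * k + 1))"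
proof -
  have pos: "0 < 1 - s ^ (2 * k + 1)" for k
    using assms power_less_one_iff[of s "2 * k + 1"] by simp
  have "- (s / (1 - s\<^sup>2) * (pi\<^sup>2 / 6)) \<le> (\<Sum>k<K. ln (1 - s ^ (2 * k + 1)))"
    using sum_neg_ln_one_minus_odd_powers_le[OF assms, of K] by (simp add: sum_negf)
  also have "\<dots> = ln (\<Prod>k<K. 1 - s ^ (2 * k + 1))"
    using pos by (simp add: ln_prod less_le)
  finally show ?thesis
    using pos by (simp add: ln_ge_iff prod_pos)
qed

lemma sqrt_div_one_minus_le:
  fixes r N :: real
  assumes "0 \<le> r" "N > 1" "r \<le> 1 - 1 / N"
  shows "sqrt r / (1 - r) \<le> sqrt (N * (N - 1))"
proof (rule real_le_rsqrt)
  have "1 / N \<le> 1 - r" "0 < 1 / N" using assms by auto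
  have "(sqrt r / (1 - r))\<^sup>2 = r / (1 - r)\<^sup>2"
    using assms by (simp add: power_divide)
  also have "\<dots> \<le> r / (1 / N)\<^sup>2"
    using \<open>1 / N \<le> 1 - r\<close> \<open>0 < 1 / N\<close> assms(1)
    by (intro divide_left_mono power_mono mult_pos_pos) auto
  also have "\<dots> \<le> (1 - 1 / N) * N\<^sup>2"
    using assms by (simp add: power_divide)
  also have "\<dots> = N * (N - 1)"
    using assms by (simp add: power2_eq_square field_simps)
  finally show "(sqrt r / (1 - r))\<^sup>2 \<le> N * (N - 1)" .
qed

lemma norm_prodinf_ge_of_partial_prods_ge:
  fixes f :: "nat \<Rightarrow> 'a :: real_normed_field"
  assumes "convergent_prod f" "\<And>M. M \<ge> n \<Longrightarrow> B \<le> norm (\<Prod>m<M. f m)"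
  shows "B \<le> norm (prodinf f)"
proof (rule LIMSEQ_le_const)
  show "(\<lambda>M. norm (\<Prod>m\<le>M. f m)) \<longlonglongrightarrow> norm (prodinf f)"
    by (intro tendsto_norm convergent_prod_LIMSEQ assms(1))
  show "\<exists>N. \<forall>M\<ge>N. B \<le> norm (\<Prod>m\<le>M. f m)"
    using assms(2) by (metis lessThan_Suc_atMost le_SucI)
qed

lemma convergent_prod_one_plus_mult_power:
  fixes z q :: "'a :: {real_normed_field, banach}"
  assumes "norm q < 1"
  shows "convergent_prod (\<lambda>m. 1 + z * q ^ Suc m)"
proof -
  have "summable (\<lambda>m. norm (z * q) * norm q ^ m)"
    using assms by (intro summable_mult summable_geometric) auto
  then have "summable (\<lambda>m. norm ((1 + z * q ^ Suc m) - 1))"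
    by (simp add: norm_mult norm_power mult.assoc)
  then show ?thesis
    by (intro abs_convergent_prod_imp_convergent_prod summable_imp_abs_convergent_prod)
qed

lemma sum_odd_minus_double_eq: "(\<Sum>m<n. 2 * real m + 1 - 2 * real n) = - (real n ^ 2)"
proof -
  have "(\<Sum>m<n. 2 * real m + 1) = real n ^ 2"
    by (induction n) (auto simp: power2_eq_square algebra_simps)
  then show ?thesis by (simp add: sum_subtractf power2_eq_square)
qed

context
  fixes q z :: complex and n :: nat
  assumes q_pos: "0 < norm q"
    and norm_z: "norm z = norm q powr (- real n - 1 / 2)"
begin

lemma norm_shifted_term:
  "norm (z * q ^ Suc m) = sqrt (norm q) powr (2 * real m + 1 - 2 * real n)"
proof -
  define s where "s = sqrt (norm q)"
  have q_eq: "norm q = s powr 2"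
    using q_pos by (simp add: s_def powr_half_sqrt[symmetric] powr_powr)
  have "norm (z * q ^ Suc m) = norm q powr (- real n - 1 / 2) * norm q powr real (Suc m)"
    using q_pos by (simp only: norm_mult norm_power norm_z powr_realpow)
  also have "\<dots> = s powr (2 * (- real n - 1 / 2)) * s powr (2 * real (Suc m))"
    by (simp only: q_eq powr_powr)
  also have "\<dots> = s powr (2 * real m + 1 - 2 * real n)"
    by (simp only: powr_add[symmetric]) (simp add: algebra_simps)
  finally show ?thesis by (simp only: s_def)
qed

lemma prod_norm_shifted_terms:
  "(\<Prod>m<n. norm (z * q ^ Suc m)) = norm q powr (- (real n ^ 2) / 2)"
proof -
  have "(\<Prod>m<n. norm (z * q ^ Suc m)) = sqrt (norm q) powr (\<Sum>m<n. 2 * real m + 1 - 2 * real n)"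
    unfolding norm_shifted_term using q_pos by (simp add: powr_sum)
  also have "\<dots> = norm q powr (- (real n ^ 2) / 2)"
    using q_pos by (simp add: sum_odd_minus_double_eq powr_half_sqrt[symmetric] powr_powr)
  finally show ?thesis .
qed

lemma norm_one_plus_shifted_term_ge_head:
  assumes "m < n"
  shows "norm (z * q ^ Suc m) * (1 - sqrt (norm q) ^ (2 * (n - Suc m) + 1))
           \<le> norm (1 + z * q ^ Suc m)"
proof -
  have s_pos: "0 < sqrt (norm q)" using q_pos by simp
  have "(2 * real m + 1 - 2 * real n) + real (2 * (n - Suc m) + 1) = 0"
    using assms by simp
  then have "norm (z * q ^ Suc m) * sqrt (norm q) ^ (2 * (n - Suc m) + 1) = 1"
    unfolding norm_shifted_term powr_realpow[OF s_pos, symmetric] powr_add[symmetric]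
    using q_pos by simp
  then have "norm (z * q ^ Suc m) * (1 - sqrt (norm q) ^ (2 * (n - Suc m) + 1))
               = norm (z * q ^ Suc m) - norm (1 :: complex)"
    by (simp add: algebra_simps)
  also have "\<dots> \<le> norm (1 + z * q ^ Suc m)"
    using norm_diff_ineq[of "z * q ^ Suc m" 1] by (simp add: add.commute)
  finally show ?thesis .
qed

lemma norm_one_plus_shifted_term_ge_tail:
  assumes "n \<le> m"
  shows "1 - sqrt (norm q) ^ (2 * (m - n) + 1) \<le> norm (1 + z * q ^ Suc m)"
proof -
  have s_pos: "0 < sqrt (norm q)" using q_pos by simp
  have "real (2 * (m - n) + 1) = 2 * real m + 1 - 2 * real n"
    using assms by simp
  then have "sqrt (norm q) ^ (2 * (m - n) + 1) = norm (z * q ^ Suc m)"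
    unfolding norm_shifted_term powr_realpow[OF s_pos, symmetric] by (simp only:)
  then show ?thesis
    using norm_diff_ineq[of 1 "z * q ^ Suc m"] by simp
qed

lemma norm_partial_prod_shifted_ge:
  assumes "norm q < 1"
  shows "norm q powr (- (real n ^ 2) / 2)
           * ((\<Prod>k<n. 1 - sqrt (norm q) ^ (2 * k + 1)) * (\<Prod>k<K. 1 - sqrt (norm q) ^ (2 * k + 1)))
         \<le> norm (\<Prod>m<n + K. 1 + z * q ^ Suc m)"
proof -
  define g where "g k = 1 - sqrt (norm q) ^ (2 * k + 1)" for k
  define f where "f m = 1 + z * q ^ Suc m" for m
  have g_nonneg: "0 \<le> g k" for k
    using assms power_le_one[of "sqrt (norm q)" "2 * k + 1"] by (simp add: g_def)
  have head: "norm q powr (- (real n ^ 2) / 2) * (\<Prod>k<n. g k) \<le> (\<Prod>m<n. norm (f m))"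
  proof -
    have "norm q powr (- (real n ^ 2) / 2) * (\<Prod>k<n. g k)
            = (\<Prod>m<n. norm (z * q ^ Suc m) * g (n - Suc m))"
      by (simp only: prod.distrib prod_norm_shifted_terms prod.nat_diff_reindex)
    also have "\<dots> \<le> (\<Prod>m<n. norm (f m))"
      using norm_one_plus_shifted_term_ge_head g_nonneg
      by (intro prod_mono) (auto simp: f_def g_def)
    finally show ?thesis .
  qed
  have tail: "(\<Prod>k<K. g k) \<le> (\<Prod>k<K. norm (f (n + k)))"
    using norm_one_plus_shifted_term_ge_tail[of "n + k" for k] g_nonneg
    by (intro prod_mono) (auto simp: f_def g_def)
  have "prod f {..<n + K} = prod f {..<n} * (\<Prod>k<K. f (n + k))"
    by (induction K) (auto simp: mult.assoc)
  then have "norm (prod f {..<n + K}) = (\<Prod>m<n. norm (f m)) * (\<Prod>k<K. norm (f (n + k)))"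
    by (simp add: norm_mult prod_norm)
  moreover have "0 \<le> norm q powr (- (real n ^ 2) / 2) * (\<Prod>k<n. g k)"
    using g_nonneg by (simp add: prod_nonneg)
  ultimately show ?thesis
    using mult_mono[OF head tail] g_nonneg by (simp add: prod_nonneg f_def g_def mult.assoc)
qed

lemma norm_partial_prod_shifted_ge_exp:
  assumes "norm q < 1" "n \<le> M"
  shows "norm q powr (- (real n ^ 2) / 2) * exp (- (pi\<^sup>2 / 3) * (sqrt (norm q) / (1 - norm q)))
           \<le> norm (\<Prod>m<M. 1 + z * q ^ Suc m)"
proof -
  define s where "s = sqrt (norm q)"
  define c where "c = s / (1 - s\<^sup>2)"
  define X where "X = exp (- (c * (pi\<^sup>2 / 6)))"
  obtain K where "M = n + K" using \<open>n \<le> M\<close> le_Suc_ex by blast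
  have "0 < s" "s < 1" using q_pos assms(1) by (simp_all add: s_def)
  have "exp (- (pi\<^sup>2 / 3) * c) = X * X"
    by (simp add: X_def flip: exp_add)
  moreover have "c = sqrt (norm q) / (1 - norm q)" using q_pos by (simp add: c_def s_def)
  ultimately have "exp (- (pi\<^sup>2 / 3) * (sqrt (norm q) / (1 - norm q))) = X * X"
    by simp
  also have "\<dots> \<le> (\<Prod>k<n. 1 - s ^ (2 * k + 1)) * (\<Prod>k<K. 1 - s ^ (2 * k + 1))"
    using prod_one_minus_odd_powers_ge[OF \<open>0 < s\<close> \<open>s < 1\<close>]
    by (intro mult_mono) (auto simp: X_def c_def intro: order_trans[OF exp_ge_zero])
  finally have "norm q powr (- (real n ^ 2) / 2) * exp (- (pi\<^sup>2 / 3) * (sqrt (norm q) / (1 - norm q)))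
      \<le> norm q powr (- (real n ^ 2) / 2)
          * ((\<Prod>k<n. 1 - s ^ (2 * k + 1)) * (\<Prod>k<K. 1 - s ^ (2 * k + 1)))"
    by (rule mult_left_mono) simp
  also have "\<dots> \<le> norm (\<Prod>m<M. 1 + z * q ^ Suc m)"
    using norm_partial_prod_shifted_ge[OF assms(1), of K] \<open>M = n + K\<close> by (simp only: s_def)
  finally show ?thesis .
qed

end

theorem lemma3:
  fixes \<alpha> :: real and n :: nat and q z :: complex
  assumes "\<alpha> > 0" and "n \<ge> 1" and "\<alpha> * real n > 1"
    and "0 < norm q" and "norm q \<le> 1 - 1 / (\<alpha> * real n)"
    and "norm z = norm q powr (- real n - 1/2)"
  shows "norm (\<Prod>m. (1 + z * q ^ (Suc m)))
           \<ge> norm q powr (- (real n ^ 2) / 2)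
             * exp (- (pi^2/3) * sqrt (\<alpha> * real n * (\<alpha> * real n - 1)))"
proof -
  define N where "N = \<alpha> * real n"
  have "N > 1" "norm q \<le> 1 - 1 / N" using assms(3,5) unfolding N_def by simp_all
  moreover have "0 < 1 / N" using \<open>N > 1\<close> by simp
  ultimately have q_less: "norm q < 1" by linarith
  have "sqrt (norm q) / (1 - norm q) \<le> sqrt (N * (N - 1))"
    using sqrt_div_one_minus_le[OF _ \<open>N > 1\<close> \<open>norm q \<le> 1 - 1 / N\<close>] by simp
  then have exp_le: "exp (- (pi\<^sup>2 / 3) * sqrt (N * (N - 1)))
               \<le> exp (- (pi\<^sup>2 / 3) * (sqrt (norm q) / (1 - norm q)))"
    unfolding exp_le_cancel_iff by (intro mult_left_mono_neg) auto
  have "norm q powr (- (real n ^ 2) / 2) * exp (- (pi\<^sup>2 / 3) * sqrt (N * (N - 1)))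
          \<le> norm (\<Prod>m<M. 1 + z * q ^ Suc m)" if "n \<le> M" for M
    using mult_left_mono[OF exp_le powr_ge_zero] norm_partial_prod_shifted_ge_exp[OF assms(4,6) q_less that]
    by (rule order_trans)
  from norm_prodinf_ge_of_partial_prods_ge[OF convergent_prod_one_plus_mult_power[OF q_less] this]
  show ?thesis by (simp add: N_def)
qed

end
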